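(* Let $H_5$ be the tournament with vertex set $\{1,2,3,4,5\}$ whose edges are $1\to4$ and $2\to5$, and $j\to i$ for every other pair $i<j$ (i.e., $2\to1$, $3\to1$, $5\to1$, $3\to2$, $4\to2$, $4\to3$, $5\to3$, $5\to4$). Then $H_5$ is not quasirandom-forcing.
   Context: A tournament is an orientation of a complete graph; $\mathrm{Aut}(H)$ is its automorphism group. For tournaments $H,G$, $d(H,G)$ is the probability that $\lvert H\rvert$ uniformly random distinct vertices of $G$ induce a tournament isomorphic to $H$ (and $0$ if $\lvert H\rvert>\lvert G\rvert$). A sequence $(G_n)$ of tournaments with $\lvert G_n\rvert\to\infty$ is quasirandom if $\lim_{n\to\infty} d(F,G_n)=\frac{m!}{\lvert\mathrm{Aut}(F)\rvert}2^{-\binom{m}{2}}$ for every tournament $F$ with $m$ vertices. A $k$-vertex tournament $H$ is quasirandom-forcing if every sequence $(G_n)$ of tournaments with $\lvert G_n\rvert\to\infty$ and $\lim_{n\to\infty} d(H,G_n)=\frac{k!}{\lvert\mathrm{Aut}(H)\rvert}2^{-\binom{k}{2}}$ is quasirandom. *)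

theory Defs
  imports "HOL-Analysis.Analysis"
begin

text \<open>A tournament on n vertices is represented with vertex set {0..<n} and an edge
relation E, where E i j means i \<rightarrow> j.\<close>

type_synonym tournament = "nat \<times> (nat \<Rightarrow> nat \<Rightarrow> bool)"

definition is_tournament :: "tournament \<Rightarrow> bool" where
  "is_tournament T \<longleftrightarrow>
     (\<forall>i j. snd T i j \<longrightarrow> i < fst T \<and> j < fst T \<and> i \<noteq> j) \<and>
     (\<forall>i j. i < fst T \<longrightarrow> j < fst T \<longrightarrow> i \<noteq> j \<longrightarrow> (snd T i j \<longleftrightarrow> \<not> snd T j i))"

definition iso_to_induced :: "tournament \<Rightarrow> tournament \<Rightarrow> nat set \<Rightarrow> bool" where
  "iso_to_induced H G S \<longleftrightarrow>
     (\<exists>f. bij_betw f {0..<fst H} S \<and>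
          (\<forall>i<fst H. \<forall>j<fst H. snd H i j \<longleftrightarrow> snd G (f i) (f j)))"

definition density :: "tournament \<Rightarrow> tournament \<Rightarrow> real" where
  "density H G =
     (if fst H > fst G then 0
      else real (card {S. S \<subseteq> {0..<fst G} \<and> card S = fst H \<and> iso_to_induced H G S})
           / real (fst G choose fst H))"

definition aut :: "tournament \<Rightarrow> (nat \<Rightarrow> nat) set" where
  "aut H = {f \<in> {0..<fst H} \<rightarrow>\<^sub>E {0..<fst H}. bij_betw f {0..<fst H} {0..<fst H} \<and>
              (\<forall>i<fst H. \<forall>j<fst H. snd H i j \<longleftrightarrow> snd H (f i) (f j))}"

definition random_density :: "tournament \<Rightarrow> real" where
  "random_density F = fact (fst F) / real (card (aut F)) * (1/2) ^ (fst F choose 2)"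

definition quasirandom :: "(nat \<Rightarrow> tournament) \<Rightarrow> bool" where
  "quasirandom G \<longleftrightarrow>
     (\<forall>F. is_tournament F \<longrightarrow> (\<lambda>n. density F (G n)) \<longlonglongrightarrow> random_density F)"

definition quasirandom_forcing :: "tournament \<Rightarrow> bool" where
  "quasirandom_forcing H \<longleftrightarrow>
     (\<forall>G. (\<forall>n. is_tournament (G n)) \<longrightarrow> filterlim (\<lambda>n. fst (G n)) at_top sequentially \<longrightarrow>
          (\<lambda>n. density H (G n)) \<longlonglongrightarrow> random_density H \<longrightarrow> quasirandom G)"

text \<open>H_5 with vertices shifted by one: paper vertex v is vertex v-1 here.
Edges 1\<rightarrow>4 and 2\<rightarrow>5 (here 0\<rightarrow>3, 1\<rightarrow>4); otherwise j\<rightarrow>i for i<j.\<close>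
definition H5 :: tournament where
  "H5 = (5, \<lambda>i j. i < 5 \<and> j < 5 \<and> i \<noteq> j \<and>
            (if {i, j} = {0, 3} \<or> {i, j} = {1, 4} then i < j else j < i))"

end

theory Submission
  imports Defs
begin

(* H5 is the Paley tournament on Z_7 with two vertices deleted, so every 5-set of the Paley
   tournament induces H5. Blowing up each vertex of the Paley tournament into a transitive block
   of size m therefore gives H5-density at least 21 m^5 / C(7m,5) >= 2520/16807, which exceeds the
   random density 5!/|Aut H5| 2^-10 <= 120/1024; the transitive tournament has H5-density 0, as H5
   contains a directed triangle. Reorienting the pairs one at a time leads from the transitive
   tournament on 7m vertices to the blow-up, and each step moves the H5-density by at most
   C(5,2)/C(7m,2), so some intermediate tournament has H5-density close to the random density.
   These tournaments are not quasirandom: all of them are transitive on the first three blocks,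
   which forces the transitive tournament on 8 vertices to have density at least (2/5)^8, much
   more than its random density 8!/2^28. *)

lemma tournament_edgeD:
  "is_tournament T \<Longrightarrow> snd T u v \<Longrightarrow> u < fst T \<and> v < fst T \<and> u \<noteq> v"
  unfolding is_tournament_def by blast

lemma tournament_flip:
  "is_tournament T \<Longrightarrow> u < fst T \<Longrightarrow> v < fst T \<Longrightarrow> u \<noteq> v \<Longrightarrow> snd T u v \<longleftrightarrow> \<not> snd T v u"
  unfolding is_tournament_def by blast

lemma is_tournamentI:
  assumes "\<And>u v. snd T u v \<Longrightarrow> u < fst T \<and> v < fst T \<and> u \<noteq> v"
    and "\<And>u v. u < fst T \<Longrightarrow> v < fst T \<Longrightarrow> u \<noteq> v \<Longrightarrow> snd T u v \<longleftrightarrow> \<not> snd T v u"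
  shows "is_tournament T"
  unfolding is_tournament_def using assms by blast

definition copies :: "tournament \<Rightarrow> tournament \<Rightarrow> nat set set" where
  "copies H G = {S. S \<subseteq> {0..<fst G} \<and> card S = fst H \<and> iso_to_induced H G S}"

lemma finite_copies: "finite (copies H G)"
  by (rule finite_subset[of _ "Pow {0..<fst G}"]) (auto simp: copies_def)

lemma density_eq_card_copies:
  "fst H \<le> fst G \<Longrightarrow> density H G = card (copies H G) / (fst G choose fst H)"
  by (simp add: density_def copies_def)

lemma iso_to_induced_cong:
  assumes "\<And>u v. u \<in> S \<Longrightarrow> v \<in> S \<Longrightarrow> snd G u v = snd G' u v"
  shows "iso_to_induced H G S \<longleftrightarrow> iso_to_induced H G' S"
  unfolding iso_to_induced_def using assms bij_betwE by (smt (verit) atLeastLessThan_iff le0)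

lemma iso_to_induced_nth:
  assumes "distinct xs" "length xs = fst H"
    and "\<And>i j. i < fst H \<Longrightarrow> j < fst H \<Longrightarrow> snd H i j \<longleftrightarrow> snd G (xs ! i) (xs ! j)"
  shows "iso_to_induced H G (set xs)"
  unfolding iso_to_induced_def
  using assms bij_betw_nth[OF assms(1), of "{0..<fst H}"] by (auto simp: atLeast0LessThan)

lemma random_density_nonneg: "0 \<le> random_density F"
  by (simp add: random_density_def)

lemma random_density_le: "random_density F \<le> fact (fst F) / 2 ^ (fst F choose 2)"
  unfolding random_density_def
  by (cases "card (aut F) = 0") (auto simp: power_one_over divide_simps)

lemma not_quasirandom_if_density_ge:
  assumes "is_tournament F" "\<And>n. c \<le> density F (G n)" "random_density F < c"
  shows "\<not> quasirandom G"
  using assms LIMSEQ_le_const unfolding quasirandom_def by (metis not_le)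

definition transitive_tournament :: "nat \<Rightarrow> tournament" where
  "transitive_tournament n = (n, \<lambda>u v. u < n \<and> v < n \<and> u < v)"

lemma fst_transitive_tournament [simp]: "fst (transitive_tournament n) = n"
  by (simp add: transitive_tournament_def)

lemma is_tournament_transitive_tournament: "is_tournament (transitive_tournament n)"
  by (rule is_tournamentI) (auto simp: transitive_tournament_def)

lemma density_eq_0_if_cyclic_triangle:
  assumes "i < fst H" "j < fst H" "k < fst H" "snd H i j" "snd H j k" "snd H k i"
    and "\<And>u v. snd G u v \<Longrightarrow> u < v"
  shows "density H G = 0"
proof -
  have "\<not> iso_to_induced H G S" for S
  proof
    assume "iso_to_induced H G S"
    then obtain f where "\<forall>i<fst H. \<forall>j<fst H. snd H i j \<longleftrightarrow> snd G (f i) (f j)"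
      unfolding iso_to_induced_def by blast
    then have "f i < f j" "f j < f k" "f k < f i"
      using assms by blast+
    then show False by simp
  qed
  then show ?thesis by (simp add: density_def)
qed

lemma density_transitive_tournament_ge:
  assumes "W \<subseteq> {0..<fst G}" "k \<le> fst G"
    and "\<And>u v. u \<in> W \<Longrightarrow> v \<in> W \<Longrightarrow> snd G u v \<longleftrightarrow> u < v"
  shows "real (card W choose k) / real (fst G choose k) \<le> density (transitive_tournament k) G"
proof -
  have sub: "{S. S \<subseteq> W \<and> card S = k} \<subseteq> copies (transitive_tournament k) G"
  proof
    fix S assume "S \<in> {S. S \<subseteq> W \<and> card S = k}"
    then have S: "S \<subseteq> W" "card S = k" by simp_all
    define xs where "xs = sorted_list_of_set S"
    have "finite S"
      using S(1) assms(1) by (meson finite_atLeastLessThan finite_subset subset_trans)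
    then have xs: "distinct xs" "length xs = k" "set xs = S" "sorted_wrt (<) xs"
      using S(2) by (simp_all add: xs_def)
    have "xs ! i < xs ! j \<longleftrightarrow> i < j" if "i < k" "j < k" for i j
      using sorted_wrt_nth_less[OF xs(4)] that xs(2) by (metis less_asym linorder_neq_iff)
    moreover have "xs ! i \<in> W" if "i < k" for i
      using that xs S(1) nth_mem by fastforce
    ultimately have "iso_to_induced (transitive_tournament k) G S"
      using iso_to_induced_nth[of xs "transitive_tournament k" G] xs assms(3)
      by (simp add: transitive_tournament_def)
    then show "S \<in> copies (transitive_tournament k) G"
      using S assms(1) by (simp add: copies_def)
  qed
  have "finite W"
    using finite_subset[OF assms(1)] by simp
  then have "card W choose k = card {S. S \<subseteq> W \<and> card S = k}"
    by (simp add: n_subsets)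
  also have "\<dots> \<le> card (copies (transitive_tournament k) G)"
    using card_mono[OF finite_copies sub] .
  finally have "card W choose k \<le> card (copies (transitive_tournament k) G)" .
  then show ?thesis
    using assms(2) by (simp add: density_eq_card_copies divide_right_mono)
qed

section \<open>Reorienting one pair at a time\<close>

lemma card_subsets_containing_pair:
  assumes "finite V"
  shows "card {S. S \<subseteq> V \<and> card S = k \<and> a \<in> S \<and> b \<in> S \<and> a \<noteq> b} \<le> (card V - 2) choose (k - 2)"
    (is "card ?P \<le> _")
proof (cases "a \<in> V \<and> b \<in> V \<and> a \<noteq> b")
  case False
  then have "?P = {}" by blast
  then show ?thesis by (metis card.empty zero_le)
next
  case True
  let ?Q = "{T. T \<subseteq> V - {a, b} \<and> card T = k - 2}"
  have "inj_on (\<lambda>S. S - {a, b}) ?P"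
    by (rule inj_onI) blast
  moreover have "(\<lambda>S. S - {a, b}) ` ?P \<subseteq> ?Q"
  proof
    fix T assume "T \<in> (\<lambda>S. S - {a, b}) ` ?P"
    then obtain S where S: "S \<in> ?P" and T: "T = S - {a, b}" by blast
    then have "finite S" using assms finite_subset by blast
    with S T show "T \<in> ?Q"
      by (auto simp: card_Diff_subset)
  qed
  ultimately have "card ?P \<le> card ?Q"
    using assms by (intro card_inj_on_le) auto
  also have "\<dots> = (card V - 2) choose (k - 2)"
    using assms True by (simp add: n_subsets card_Diff_subset numeral_2_eq_2)
  finally show ?thesis .
qed

lemma binomial_ratio_pair:
  assumes "2 \<le> k" "k \<le> N"
  shows "real ((N - 2) choose (k - 2)) / real (N choose k) = real (k choose 2) / real (N choose 2)"
proof -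
  have "real (N choose k) * real (k choose 2) = real (N choose 2) * real ((N - 2) choose (k - 2))"
    using choose_mult[OF assms] by (metis of_nat_mult)
  moreover have "0 < real (N choose k)" "0 < real (N choose 2)"
    using assms by auto
  ultimately show ?thesis
    by (simp add: field_simps)
qed

lemma abs_card_diff_le:
  assumes "finite A" "finite B" "finite C" "A \<subseteq> B \<union> C" "B \<subseteq> A \<union> C"
  shows "\<bar>real (card A) - real (card B)\<bar> \<le> real (card C)"
proof -
  have "card A \<le> card B + card C" "card B \<le> card A + card C"
    using assms card_mono[of "B \<union> C" A] card_mono[of "A \<union> C" B] card_Un_le[of B C] card_Un_le[of A C]
    by auto
  then show ?thesis by linarith
qed

lemma copies_subset_if_differ_on_pair:
  assumes G: "is_tournament G" and G': "is_tournament G'" and "fst G' = fst G"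
    and differ: "\<And>u v. snd G u v \<noteq> snd G' u v \<Longrightarrow> {u, v} = {a, b}"
  shows "copies H G \<subseteq> copies H G' \<union> {S. S \<subseteq> {0..<fst G} \<and> card S = fst H \<and> a \<in> S \<and> b \<in> S \<and> a \<noteq> b}"
proof
  fix S assume S: "S \<in> copies H G"
  show "S \<in> copies H G' \<union> {S. S \<subseteq> {0..<fst G} \<and> card S = fst H \<and> a \<in> S \<and> b \<in> S \<and> a \<noteq> b}"
  proof (cases "a \<in> S \<and> b \<in> S \<and> a \<noteq> b")
    case True
    with S show ?thesis
      by (simp add: copies_def)
  next
    case False
    have "snd G u v = snd G' u v" if "u \<in> S" "v \<in> S" for u v
    proof (rule ccontr)
      assume uv: "snd G u v \<noteq> snd G' u v"
      then have "u \<noteq> v"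
        using tournament_edgeD[OF G] tournament_edgeD[OF G'] by blast
      with differ[OF uv] that False show False
        by (auto simp: doubleton_eq_iff)
    qed
    then have "iso_to_induced H G' S"
      using S iso_to_induced_cong[of S G G' H] by (simp add: copies_def)
    with S \<open>fst G' = fst G\<close> show ?thesis
      by (simp add: copies_def)
  qed
qed

lemma density_diff_le_if_differ_on_pair:
  assumes "is_tournament G" "is_tournament G'" "fst G' = fst G" "2 \<le> fst H"
    and differ: "\<And>u v. snd G u v \<noteq> snd G' u v \<Longrightarrow> {u, v} = {a, b}"
  shows "\<bar>density H G - density H G'\<bar> \<le> (fst H choose 2) / (fst G choose 2)"
proof (cases "fst H \<le> fst G")
  case False
  then show ?thesis
    using \<open>fst G' = fst G\<close> by (simp add: density_def)
next
  case True
  let ?N = "fst G" and ?k = "fst H"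
  let ?P = "{S. S \<subseteq> {0..<?N} \<and> card S = ?k \<and> a \<in> S \<and> b \<in> S \<and> a \<noteq> b}"
  have "copies H G \<subseteq> copies H G' \<union> ?P"
    by (rule copies_subset_if_differ_on_pair[OF assms(1-3) differ])
  moreover have "copies H G' \<subseteq> copies H G \<union> ?P"
  proof -
    have "{u, v} = {a, b}" if "snd G' u v \<noteq> snd G u v" for u v
      using that differ[of u v] by auto
    then show ?thesis
      using copies_subset_if_differ_on_pair[OF assms(2,1) assms(3)[symmetric], of a b H] assms(3)
      by simp
  qed
  moreover have "finite ?P"
    by (rule finite_subset[of _ "Pow {0..<?N}"]) auto
  ultimately have "\<bar>real (card (copies H G)) - real (card (copies H G'))\<bar> \<le> card ?P"
    by (intro abs_card_diff_le finite_copies)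
  also have "card ?P \<le> (?N - 2) choose (?k - 2)"
    using card_subsets_containing_pair[of "{0..<?N}"] by simp
  finally have "\<bar>real (card (copies H G)) - real (card (copies H G'))\<bar> \<le> (?N - 2) choose (?k - 2)"
    by simp
  moreover have "\<bar>density H G - density H G'\<bar>
      = \<bar>real (card (copies H G)) - real (card (copies H G'))\<bar> / real (?N choose ?k)"
    using True \<open>fst G' = fst G\<close>
    by (simp add: density_eq_card_copies abs_divide flip: diff_divide_distrib)
  ultimately have "\<bar>density H G - density H G'\<bar> \<le> real ((?N - 2) choose (?k - 2)) / real (?N choose ?k)"
    by (simp add: divide_right_mono)
  also have "\<dots> = (?k choose 2) / (?N choose 2)"
    using binomial_ratio_pair True \<open>2 \<le> fst H\<close> by blast
  finally show ?thesis .
qed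

definition pair_index :: "nat \<Rightarrow> nat \<Rightarrow> nat \<Rightarrow> nat" where
  "pair_index N u v = min u v * N + max u v"

definition interpolate :: "tournament \<Rightarrow> tournament \<Rightarrow> nat \<Rightarrow> tournament" where
  "interpolate A B s =
     (fst A, \<lambda>u v. if pair_index (fst A) u v < s then snd B u v else snd A u v)"

lemma fst_interpolate [simp]: "fst (interpolate A B s) = fst A"
  by (simp add: interpolate_def)

lemma interpolate_0: "interpolate A B 0 = A"
  by (simp add: interpolate_def)

lemma pair_index_commute: "pair_index N u v = pair_index N v u"
  by (simp add: pair_index_def min.commute max.commute)

lemma pair_index_less: "u < N \<Longrightarrow> v < N \<Longrightarrow> pair_index N u v < N * N"
proof -
  assume "u < N" "v < N"
  then have "(min u v + 1) * N \<le> N * N"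
    by (intro mult_le_mono1) simp
  with \<open>u < N\<close> \<open>v < N\<close> show ?thesis
    by (simp add: pair_index_def algebra_simps)
qed

lemma pair_index_eqD:
  assumes "pair_index N u v = s" "u < N" "v < N"
  shows "{u, v} = {s div N, s mod N}"
proof -
  have "max u v < N" using assms by simp
  then have "s div N = min u v" "s mod N = max u v"
    using assms(1) unfolding pair_index_def by auto
  then show ?thesis
    by (auto simp: min_def max_def)
qed

context
  fixes A B :: tournament
  assumes A: "is_tournament A" and B: "is_tournament B" and same_size: "fst B = fst A"
begin

lemma is_tournament_interpolate: "is_tournament (interpolate A B s)"
proof (rule is_tournamentI)
  show "u < fst (interpolate A B s) \<and> v < fst (interpolate A B s) \<and> u \<noteq> v"
    if "snd (interpolate A B s) u v" for u v
    using that tournament_edgeD[OF A] tournament_edgeD[OF B] same_size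
    by (auto simp: interpolate_def split: if_splits)
  show "snd (interpolate A B s) u v \<longleftrightarrow> \<not> snd (interpolate A B s) v u"
    if "u < fst (interpolate A B s)" "v < fst (interpolate A B s)" "u \<noteq> v" for u v
    using that tournament_flip[OF A, of u v] tournament_flip[OF B, of u v] same_size
    by (simp add: interpolate_def pair_index_commute)
qed

lemma interpolate_complete: "interpolate A B (fst A * fst A) = B"
proof -
  have "snd (interpolate A B (fst A * fst A)) u v = snd B u v" for u v
    using tournament_edgeD[OF A] tournament_edgeD[OF B] same_size pair_index_less[of u "fst A" v]
    by (auto simp: interpolate_def)
  then show ?thesis
    using same_size by (simp add: prod_eq_iff fun_eq_iff)
qed

lemma interpolate_Suc_differ:
  assumes "snd (interpolate A B (Suc s)) u v \<noteq> snd (interpolate A B s) u v"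
  shows "{u, v} = {s div fst A, s mod fst A}"
proof -
  have "pair_index (fst A) u v = s" "snd A u v \<or> snd B u v"
    using assms by (auto simp: interpolate_def split: if_splits)
  moreover have "u < fst A" "v < fst A"
    using calculation(2) tournament_edgeD[OF A] tournament_edgeD[OF B] same_size by auto
  ultimately show ?thesis
    using pair_index_eqD by blast
qed

end

lemma discrete_intermediate_value:
  fixes f :: "nat \<Rightarrow> real"
  assumes "0 \<le> d" "f 0 \<le> t" "t \<le> f L" "\<And>s. s < L \<Longrightarrow> \<bar>f (Suc s) - f s\<bar> \<le> d"
  shows "\<exists>s. \<bar>f s - t\<bar> \<le> d"
  using assms(3,4)
proof (induction L)
  case 0
  then show ?case
    using assms(1,2) by (intro exI[of _ 0]) auto
next
  case (Suc L)
  show ?case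
  proof (cases "t \<le> f L")
    case True
    then show ?thesis using Suc by auto
  next
    case False
    then have "\<bar>f (Suc L) - t\<bar> \<le> d" using Suc.prems by force
    then show ?thesis by blast
  qed
qed

lemma exists_interpolate_density_close:
  assumes A: "is_tournament A" and B: "is_tournament B" and "fst B = fst A" "2 \<le> fst H"
    and "density H A \<le> t" "t \<le> density H B"
  shows "\<exists>s. \<bar>density H (interpolate A B s) - t\<bar> \<le> (fst H choose 2) / (fst A choose 2)"
proof (rule discrete_intermediate_value)
  show "density H (interpolate A B 0) \<le> t"
    using assms by (simp add: interpolate_0)
  show "t \<le> density H (interpolate A B (fst A * fst A))"
    using assms by (simp add: interpolate_complete)
  show "\<bar>density H (interpolate A B (Suc s)) - density H (interpolate A B s)\<bar>
      \<le> (fst H choose 2) / (fst A choose 2)" for s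
    using density_diff_le_if_differ_on_pair[of "interpolate A B (Suc s)" "interpolate A B s" H]
      assms is_tournament_interpolate interpolate_Suc_differ by simp
qed simp

lemma le_choose_two: "3 \<le> n \<Longrightarrow> n \<le> n choose 2"
proof -
  assume "3 \<le> n"
  then have "2 * n \<le> n * (n - 1)" by simp
  then have "2 * n div 2 \<le> n * (n - 1) div 2"
    by (rule div_le_mono)
  then show ?thesis
    by (simp add: choose_two)
qed

lemma interpolation_sequence_density_tendsto:
  assumes "\<And>n. is_tournament (A n)" "\<And>n. is_tournament (B n)" "\<And>n. fst (B n) = fst (A n)"
    and size: "filterlim (\<lambda>n. fst (A n)) at_top sequentially" and "2 \<le> fst H"
    and "\<And>n. density H (A n) \<le> t" "\<And>n. t \<le> density H (B n)"
  obtains s where "(\<lambda>n. density H (interpolate (A n) (B n) (s n))) \<longlonglongrightarrow> t"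
proof -
  let ?bound = "\<lambda>n. real (fst H choose 2) / real (fst (A n) choose 2)"
  have "\<exists>s. \<bar>density H (interpolate (A n) (B n) s) - t\<bar> \<le> ?bound n" for n
    by (rule exists_interpolate_density_close) (use assms in auto)
  then obtain s where s: "\<And>n. \<bar>density H (interpolate (A n) (B n) (s n)) - t\<bar> \<le> ?bound n"
    by metis
  have "eventually (\<lambda>n. 3 \<le> fst (A n)) sequentially"
    using size by (simp add: filterlim_at_top)
  then have "eventually (\<lambda>n. fst (A n) \<le> fst (A n) choose 2) sequentially"
    by (rule eventually_mono) (rule le_choose_two)
  then have "filterlim (\<lambda>n. fst (A n) choose 2) at_top sequentially"
    by (rule filterlim_at_top_mono[OF size])
  then have bound: "?bound \<longlonglongrightarrow> 0"
    by (intro tendsto_divide_0[OF tendsto_const] filterlim_at_top_imp_at_infinity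
        filterlim_compose[OF filterlim_real_sequentially])
  have "(\<lambda>n. density H (interpolate (A n) (B n) (s n)) - t) \<longlonglongrightarrow> 0"
    by (rule Lim_null_comparison[OF always_eventually bound]) (use s in simp)
  then show thesis
    using that LIM_zero_iff by blast
qed

section \<open>Blow-ups\<close>

definition blowup :: "tournament \<Rightarrow> nat \<Rightarrow> tournament" where
  "blowup Q m = (fst Q * m, \<lambda>u v. u < fst Q * m \<and> v < fst Q * m \<and> u \<noteq> v \<and>
     (if u div m = v div m then u < v else snd Q (u div m) (v div m)))"

lemma fst_blowup [simp]: "fst (blowup Q m) = fst Q * m"
  by (simp add: blowup_def)

lemma is_tournament_blowup:
  assumes "is_tournament Q"
  shows "is_tournament (blowup Q m)"
proof (rule is_tournamentI)
  show "u < fst (blowup Q m) \<and> v < fst (blowup Q m) \<and> u \<noteq> v" if "snd (blowup Q m) u v" for u v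
    using that by (simp add: blowup_def)
  fix u v assume "u < fst (blowup Q m)" "v < fst (blowup Q m)" "u \<noteq> v"
  then have "u < fst Q * m" "v < fst Q * m" "u \<noteq> v" by simp_all
  moreover have "u div m < fst Q" "v div m < fst Q"
    using calculation by (simp_all add: less_mult_imp_div_less)
  ultimately show "snd (blowup Q m) u v \<longleftrightarrow> \<not> snd (blowup Q m) v u"
    using tournament_flip[OF assms, of "u div m" "v div m"] by (auto simp: blowup_def)
qed

lemma blowup_edge_iff_less:
  assumes "r \<le> fst Q" "\<And>a b. a < r \<Longrightarrow> b < r \<Longrightarrow> snd Q a b \<longleftrightarrow> a < b"
    and "u < r * m" "v < r * m"
  shows "snd (blowup Q m) u v \<longleftrightarrow> u < v"
proof -
  have "u div m < r" "v div m < r"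
    using assms(3,4) by (simp_all add: less_mult_imp_div_less)
  moreover have "u div m < v div m \<longleftrightarrow> u < v" if "u div m \<noteq> v div m"
    using that div_le_mono[of u v m] div_le_mono[of v u m] by linarith
  moreover have "u < fst Q * m" "v < fst Q * m"
    using assms(1,3,4) mult_le_mono1[OF assms(1), of m] by linarith+
  ultimately show ?thesis
    using assms(2) by (auto simp: blowup_def)
qed

lemma lift_copy_to_blowup:
  assumes Q: "is_tournament Q" and "0 < m"
    and S: "S \<in> copies H Q" and g: "g \<in> S \<rightarrow>\<^sub>E {..<m}"
  shows "(\<lambda>x. x * m + g x) ` S \<in> copies H (blowup Q m)"
proof -
  let ?lift = "\<lambda>x. x * m + g x"
  obtain f where f: "bij_betw f {0..<fst H} S"
    and edges: "\<And>i j. i < fst H \<Longrightarrow> j < fst H \<Longrightarrow> snd H i j \<longleftrightarrow> snd Q (f i) (f j)"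
    using S unfolding copies_def iso_to_induced_def by blast
  have block: "?lift x div m = x" if "x \<in> S" for x
    using PiE_mem[OF g that] \<open>0 < m\<close> by simp
  have lift_less: "?lift x < fst Q * m" if "x \<in> S" for x
  proof -
    have "?lift x < (x + 1) * m"
      using PiE_mem[OF g that] by simp
    also have "\<dots> \<le> fst Q * m"
      using S that by (intro mult_le_mono1) (auto simp: copies_def)
    finally show ?thesis .
  qed
  have inj: "inj_on ?lift S"
    by (rule inj_on_inverseI[of _ "\<lambda>y. y div m"]) (rule block)
  then have bij: "bij_betw (?lift \<circ> f) {0..<fst H} (?lift ` S)"
    using bij_betw_trans[OF f bij_betw_imageI] by blast
  have "snd H i j \<longleftrightarrow> snd (blowup Q m) (?lift (f i)) (?lift (f j))"
    if "i < fst H" "j < fst H" for i j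
  proof -
    have "f i \<in> S" "f j \<in> S" "f i = f j \<longleftrightarrow> i = j"
      using that f by (auto simp: bij_betw_def inj_on_def)
    then show ?thesis
      using edges[OF that] tournament_edgeD[OF Q, of "f i" "f i"] block lift_less inj_on_eq_iff[OF inj]
      by (auto simp: blowup_def)
  qed
  with bij have "iso_to_induced H (blowup Q m) (?lift ` S)"
    unfolding iso_to_induced_def by auto
  moreover have "card (?lift ` S) = fst H"
    using bij_betw_same_card[OF bij] by simp
  ultimately show ?thesis
    using lift_less by (auto simp: copies_def)
qed

lemma inj_on_lift_to_blocks:
  fixes m :: nat and \<S> :: "nat set set"
  assumes "0 < m"
  shows "inj_on (\<lambda>(S, g). (\<lambda>x. x * m + g x) ` S) (SIGMA S:\<S>. S \<rightarrow>\<^sub>E {..<m})"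
proof (rule inj_onI, clarify)
  let ?lift = "\<lambda>g x. x * m + g x"
  have blocks: "(\<lambda>y. y div m) ` ?lift g ` S = S" if "g \<in> S \<rightarrow>\<^sub>E {..<m}" for g S
  proof -
    have "(\<lambda>x. (x * m + g x) div m) ` S = (\<lambda>x. x) ` S"
      using PiE_mem[OF that] assms by (intro image_cong) auto
    then show ?thesis
      by (simp add: image_image)
  qed
  fix S g S' g' assume g: "g \<in> S \<rightarrow>\<^sub>E {..<m}" and g': "g' \<in> S' \<rightarrow>\<^sub>E {..<m}"
    and eq: "?lift g ` S = ?lift g' ` S'"
  have "S' = S"
    using eq blocks g g' by metis
  moreover have "g x = g' x" if "x \<in> S" for x
  proof -
    have "?lift g x \<in> ?lift g' ` S'"
      unfolding eq[symmetric] using that by (rule imageI)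
    then obtain y where "y \<in> S'" and lift_eq: "?lift g x = ?lift g' y"
      by (rule imageE)
    moreover have "?lift g x div m = x" "?lift g' y div m = y"
      using PiE_mem[OF g that] PiE_mem[OF g' \<open>y \<in> S'\<close>] assms by simp_all
    ultimately have "x = y"
      by metis
    then show ?thesis
      using lift_eq by simp
  qed
  ultimately show "S = S' \<and> g = g'"
    using g g' by (auto intro: PiE_ext)
qed

lemma card_copies_blowup_ge:
  assumes Q: "is_tournament Q" and "0 < m" and "\<S> \<subseteq> copies H Q"
  shows "card \<S> * m ^ fst H \<le> card (copies H (blowup Q m))"
proof -
  let ?lift = "\<lambda>g x. x * m + g x"
  let ?D = "SIGMA S:\<S>. S \<rightarrow>\<^sub>E {..<m}"
  have "finite \<S>"
    using assms(3) finite_copies finite_subset by blast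
  moreover have "finite S" "card S = fst H" if "S \<in> \<S>" for S
    using that assms(3) finite_subset[of S "{0..<fst Q}"] by (auto simp: copies_def)
  ultimately have card_D: "card ?D = (\<Sum>S\<in>\<S>. m ^ fst H)"
    by (simp add: card_PiE finite_PiE)
  have "(\<lambda>(S, g). ?lift g ` S) ` ?D \<subseteq> copies H (blowup Q m)"
  proof clarify
    fix S g assume "S \<in> \<S>" "g \<in> S \<rightarrow>\<^sub>E {..<m}"
    then show "?lift g ` S \<in> copies H (blowup Q m)"
      using assms(3) lift_copy_to_blowup[OF Q \<open>0 < m\<close>, of S H g] by blast
  qed
  then have "card ?D \<le> card (copies H (blowup Q m))"
    using card_inj_on_le[OF inj_on_lift_to_blocks[OF \<open>0 < m\<close>] _ finite_copies] by blast
  then show ?thesis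
    using card_D by (simp add: mult.commute)
qed

section \<open>The Paley tournament on seven vertices\<close>

(* a \<rightarrow> b iff b - a is a nonzero square mod 7; the + 7 avoids truncated subtraction. *)
definition paley7 :: tournament where
  "paley7 = (7, \<lambda>a b. a < 7 \<and> b < 7 \<and> (b + 7 - a) mod 7 \<in> {1, 2, 4})"

lemma fst_paley7 [simp]: "fst paley7 = 7"
  by (simp add: paley7_def)

lemma is_tournament_paley7: "is_tournament paley7"
proof (rule is_tournamentI)
  show "u < fst paley7 \<and> v < fst paley7 \<and> u \<noteq> v" if "snd paley7 u v" for u v
    using that by (auto simp: paley7_def)
  have "\<forall>u\<in>{0..<7}. \<forall>v\<in>{0..<7}. u \<noteq> v \<longrightarrow> (snd paley7 u v \<longleftrightarrow> \<not> snd paley7 v u)"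
    unfolding paley7_def by code_simp
  then show "snd paley7 u v \<longleftrightarrow> \<not> snd paley7 v u"
    if "u < fst paley7" "v < fst paley7" "u \<noteq> v" for u v
    using that by (metis atLeastLessThan_iff fst_paley7 le0)
qed

lemma paley7_edge_iff_less: "a < 3 \<Longrightarrow> b < 3 \<Longrightarrow> snd paley7 a b \<longleftrightarrow> a < b"
proof -
  have "\<forall>a\<in>{0..<3}. \<forall>b\<in>{0..<3}. snd paley7 a b \<longleftrightarrow> a < b"
    unfolding paley7_def by code_simp
  then show "a < 3 \<Longrightarrow> b < 3 \<Longrightarrow> snd paley7 a b \<longleftrightarrow> a < b"
    by simp
qed

section \<open>H5 inside the Paley tournament\<close>

lemma fst_H5 [simp]: "fst H5 = 5"
  by (simp add: H5_def)

lemma is_tournament_H5: "is_tournament H5"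
proof (rule is_tournamentI)
  show "u < fst H5 \<and> v < fst H5 \<and> u \<noteq> v" if "snd H5 u v" for u v
    using that by (simp add: H5_def)
  have "\<forall>u\<in>{0..<5}. \<forall>v\<in>{0..<5}. u \<noteq> v \<longrightarrow> (snd H5 u v \<longleftrightarrow> \<not> snd H5 v u)"
    unfolding H5_def by code_simp
  then show "snd H5 u v \<longleftrightarrow> \<not> snd H5 v u"
    if "u < fst H5" "v < fst H5" "u \<noteq> v" for u v
    using that by (metis atLeastLessThan_iff fst_H5 le0)
qed

(* [4, 3, 2, 1, 0] embeds H5 into paley7; the affine maps x \<mapsto> c x + d with c a nonzero square
   are automorphisms of paley7 and carry this copy onto all 21 five-element subsets. *)
definition paley7_H5_embeddings :: "nat list list" where
  "paley7_H5_embeddings = [map (\<lambda>x. (c * x + d) mod 7) [4, 3, 2, 1, 0]. c \<leftarrow> [1, 2, 4], d \<leftarrow> [0..<7]]"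

lemma paley7_H5_embeddings_embed:
  "list_all (\<lambda>xs. distinct xs \<and> length xs = 5 \<and> set xs \<subseteq> {0..<7} \<and>
     (\<forall>i<5. \<forall>j<5. snd H5 i j \<longleftrightarrow> snd paley7 (xs ! i) (xs ! j))) paley7_H5_embeddings"
  unfolding paley7_H5_embeddings_def paley7_def H5_def by code_simp

lemma distinct_paley7_H5_embeddings: "distinct (map set paley7_H5_embeddings)"
  unfolding paley7_H5_embeddings_def by code_simp

lemma binomial_7_5: "(7::nat) choose 5 = 21"
  by code_simp

lemma copies_H5_paley7: "copies H5 paley7 = {S. S \<subseteq> {0..<7} \<and> card S = 5}"
proof -
  let ?C = "set (map set paley7_H5_embeddings)"
  have C: "?C \<subseteq> copies H5 paley7"
  proof
    fix S assume "S \<in> ?C"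
    then obtain xs where "xs \<in> set paley7_H5_embeddings" "S = set xs"
      by auto
    then have "distinct xs" "length xs = 5" "S \<subseteq> {0..<7}"
      and "\<And>i j. i < 5 \<Longrightarrow> j < 5 \<Longrightarrow> snd H5 i j \<longleftrightarrow> snd paley7 (xs ! i) (xs ! j)"
      using paley7_H5_embeddings_embed by (auto simp: list_all_iff)
    with \<open>S = set xs\<close> show "S \<in> copies H5 paley7"
      using iso_to_induced_nth[of xs H5 paley7] by (simp add: copies_def distinct_card)
  qed
  have copies: "copies H5 paley7 \<subseteq> {S. S \<subseteq> {0..<7} \<and> card S = 5}"
    by (auto simp: copies_def)
  have "card ?C = card {S. S \<subseteq> {0..<7::nat} \<and> card S = 5}"
  proof -
    have "card ?C = length paley7_H5_embeddings"
      using distinct_card[OF distinct_paley7_H5_embeddings] by (simp only: length_map)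
    also have "\<dots> = 7 choose 5"
      by (simp add: paley7_H5_embeddings_def binomial_7_5)
    finally show ?thesis
      by (simp add: n_subsets)
  qed
  moreover have "finite {S. S \<subseteq> {0..<7::nat} \<and> card S = 5}"
    by (rule finite_subset[of _ "Pow {0..<7}"]) auto
  ultimately have "?C = {S. S \<subseteq> {0..<7} \<and> card S = 5}"
    using C copies by (intro card_subset_eq) auto
  then show ?thesis
    using C copies by blast
qed

lemma density_H5_transitive_tournament: "density H5 (transitive_tournament n) = 0"
  by (rule density_eq_0_if_cyclic_triangle[of 0 H5 3 1])
    (auto simp: H5_def transitive_tournament_def doubleton_eq_iff)

lemma random_density_H5_le: "random_density H5 \<le> 120 / 1024"
  using random_density_le[of H5] by (simp add: fact_numeral choose_two)

lemma density_H5_blowup_paley7: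
  assumes "0 < m"
  shows "2520 / 16807 \<le> density H5 (blowup paley7 m)"
proof -
  have "card (copies H5 paley7) = 21"
    by (simp add: copies_H5_paley7 n_subsets binomial_7_5)
  then have "21 * m ^ 5 \<le> card (copies H5 (blowup paley7 m))"
    using card_copies_blowup_ge[OF is_tournament_paley7 assms, of "copies H5 paley7" H5] by simp
  then have "real (21 * m ^ 5) \<le> card (copies H5 (blowup paley7 m))"
    by (simp only: of_nat_le_iff)
  then have many_copies: "21 * real m ^ 5 \<le> card (copies H5 (blowup paley7 m))"
    by simp
  have "(7 * m choose 5) * 120 \<le> (7 * m) ^ 5"
    using binomial_fact_pow[of "7 * m" 5] by (simp add: fact_numeral)
  then have "real ((7 * m choose 5) * 120) \<le> real ((7 * m) ^ 5)"
    by (simp only: of_nat_le_iff)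
  then have binomial: "real (7 * m choose 5) \<le> real (7 * m) ^ 5 / 120"
    by simp
  have "0 < real (7 * m choose 5)"
    using assms by simp
  have "2520 / 16807 = 21 * real m ^ 5 / (real (7 * m) ^ 5 / 120)"
    using assms by (simp add: field_simps)
  also have "\<dots> \<le> 21 * real m ^ 5 / real (7 * m choose 5)"
    using binomial \<open>0 < real (7 * m choose 5)\<close> by (intro divide_left_mono) auto
  also have "\<dots> \<le> card (copies H5 (blowup paley7 m)) / real (7 * m choose 5)"
    using many_copies \<open>0 < real (7 * m choose 5)\<close> by (intro divide_right_mono) auto
  also have "\<dots> = density H5 (blowup paley7 m)"
    using assms by (simp add: density_eq_card_copies mult.commute)
  finally show ?thesis .
qed

lemma binomial_3m_7m_ratio_ge:
  assumes "21 \<le> m"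
  shows "(2/5) ^ 8 \<le> real (3 * m choose 8) / real (7 * m choose 8)"
proof -
  have "real (3 * m choose 8) / real (7 * m choose 8)
      = (\<Prod>i = 0..<8. (real (3 * m - i) / real (8 - i)) / (real (7 * m - i) / real (8 - i)))"
    using assms by (simp add: binomial_altdef_of_nat prod_dividef)
  also have "\<dots> = (\<Prod>i = 0..<8. real (3 * m - i) / real (7 * m - i))"
    by (intro prod.cong) auto
  also have "(\<Prod>i\<in>{0..<8::nat}. 2/5) \<le> \<dots>"
  proof (intro prod_mono conjI)
    fix i :: nat assume "i \<in> {0..<8}"
    then have "i < 8" by simp
    with assms show "2/5 \<le> real (3 * m - i) / real (7 * m - i)"
      by (simp add: of_nat_diff divide_simps)
  qed auto
  finally show ?thesis by simp
qed

lemma density_transitive_8_interpolate_blowup_paley7: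
  assumes "21 \<le> m"
  shows "(2/5) ^ 8 \<le>
    density (transitive_tournament 8) (interpolate (transitive_tournament (7 * m)) (blowup paley7 m) s)"
    (is "_ \<le> density _ ?G")
proof -
  have "snd ?G u v \<longleftrightarrow> u < v" if "u \<in> {0..<3 * m}" "v \<in> {0..<3 * m}" for u v
  proof -
    have "snd (blowup paley7 m) u v \<longleftrightarrow> u < v"
      using that by (intro blowup_edge_iff_less[of 3]) (auto simp: paley7_edge_iff_less)
    with that show ?thesis
      by (auto simp: interpolate_def transitive_tournament_def)
  qed
  then have "real (card {0..<3 * m} choose 8) / real (fst ?G choose 8) \<le> density (transitive_tournament 8) ?G"
    using assms by (intro density_transitive_tournament_ge) auto
  then show ?thesis
    using binomial_3m_7m_ratio_ge[OF assms] by simp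
qed

lemma random_density_transitive_8_less: "random_density (transitive_tournament 8) < (2/5) ^ 8"
  using random_density_le[of "transitive_tournament 8"] by (simp add: fact_numeral choose_two power_divide)

lemma H5_density_interpolation_tendsto:
  assumes size: "filterlim m at_top sequentially" and "\<And>n. 0 < m n"
  obtains s where "(\<lambda>n. density H5 (interpolate (transitive_tournament (7 * m n)) (blowup paley7 (m n)) (s n)))
    \<longlonglongrightarrow> random_density H5"
proof -
  have "filterlim (\<lambda>n. fst (transitive_tournament (7 * m n))) at_top sequentially"
    by (rule filterlim_at_top_mono[OF size]) simp
  moreover have "random_density H5 \<le> density H5 (blowup paley7 (m n))" for n
    using random_density_H5_le density_H5_blowup_paley7[OF assms(2)[of n]] by linarith
  ultimately show thesis
    using that interpolation_sequence_density_tendsto[of "\<lambda>n. transitive_tournament (7 * m n)"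
        "\<lambda>n. blowup paley7 (m n)" H5 "random_density H5"]
      is_tournament_transitive_tournament is_tournament_blowup[OF is_tournament_paley7]
      density_H5_transitive_tournament random_density_nonneg
    by auto
qed

theorem mainTheorem6:
  shows "is_tournament H5 \<and> \<not> quasirandom_forcing H5"
proof -
  define m :: "nat \<Rightarrow> nat" where "m n = n + 21" for n
  have size: "filterlim m at_top sequentially"
    unfolding m_def by (rule filterlim_at_top_mono[OF filterlim_ident]) simp
  then obtain s where lim: "(\<lambda>n. density H5 (interpolate (transitive_tournament (7 * m n))
      (blowup paley7 (m n)) (s n))) \<longlonglongrightarrow> random_density H5"
    by (rule H5_density_interpolation_tendsto) (simp add: m_def)
  define G where "G n = interpolate (transitive_tournament (7 * m n)) (blowup paley7 (m n)) (s n)" for n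
  have "is_tournament (G n)" for n
    unfolding G_def
    by (intro is_tournament_interpolate is_tournament_transitive_tournament
        is_tournament_blowup is_tournament_paley7) simp
  moreover have "filterlim (\<lambda>n. fst (G n)) at_top sequentially"
    by (rule filterlim_at_top_mono[OF size]) (simp add: G_def)
  moreover have "(\<lambda>n. density H5 (G n)) \<longlonglongrightarrow> random_density H5"
    using lim by (simp add: G_def)
  moreover have "\<not> quasirandom G"
    using is_tournament_transitive_tournament random_density_transitive_8_less
      density_transitive_8_interpolate_blowup_paley7[of "m n" for n]
    by (intro not_quasirandom_if_density_ge) (auto simp: G_def m_def)
  ultimately show ?thesis
    using is_tournament_H5 unfolding quasirandom_forcing_def by blast
qed

end
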